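(* Fix a distribution $\nu$ on $\mathcal{W}$ and let $\psi:(0,\infty)\to\mathbb{R}$ satisfy $\psi(t)\ge\mathbb{E}_{W\sim\nu}\big[e^{t(\ell(W,z)-\mathbb{E}_\nu[\ell(W,z)])}\big]$ for all $z\in\mathcal{Z}$ and $t>0$. Then for every $\lambda>0$, \[ \inf_{\pi\in U(\nu,(\mu')^{\otimes n})}\Big\{\mathbb{E}_\pi\big[L_\mu(W')-L_{S'}(W')\big]+\lambda D\big(\pi\,\|\,\nu\otimes(\mu')^{\otimes n}\big)\Big\}\ \ge\ \mathbb{E}_{W\sim\nu}\big[L_\mu(W)-L_{\mu'}(W)\big]-\lambda\big(\psi(1/(n\lambda))^n-1\big). \]
   Context: $\mathcal{Z},\mathcal{W}$ measurable spaces, $\ell:\mathcal{W}\times\mathcal{Z}\to[0,\infty)$ measurable loss, $\mu,\mu'$ distributions on $\mathcal{Z}$, $L_\mu(w)=\mathbb{E}_{Z\sim\mu}\ell(w,Z)$, $L_{\mu'}$ likewise, $L_s(w)=\frac1n\sum_{i=1}^n\ell(w,z_i)$. $U(\nu,(\mu')^{\otimes n})$ is the set of couplings of $\nu$ and $(\mu')^{\otimes n}$ on $\mathcal{W}\times\mathcal{Z}^n$, and $(W',S')\sim\pi$. $D$ is KL divergence. All expectations assumed finite. *)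

theory Defs
  imports "HOL-Probability.Probability"
begin

definition KL :: "'a measure \<Rightarrow> 'a measure \<Rightarrow> ereal" where
  "KL P Q = (if absolutely_continuous Q P \<and> sets P = sets Q \<and>
                 integrable P (entropy_density (exp 1) Q P)
             then ereal (KL_divergence (exp 1) Q P) else \<infinity>)"

text \<open>Couplings of nu and the n-fold product of mu' on W x Z^n (Z^n as functions on {..<n}).\<close>
definition couplings :: "'w measure \<Rightarrow> 'z measure \<Rightarrow> nat \<Rightarrow> ('w \<times> (nat \<Rightarrow> 'z)) measure set" where
  "couplings \<nu> \<mu>' n = {\<pi>. prob_space \<pi> \<and>
      sets \<pi> = sets (\<nu> \<Otimes>\<^sub>M PiM {..<n} (\<lambda>_. \<mu>')) \<and>
      distr \<pi> \<nu> fst = \<nu> \<and> distr \<pi> (PiM {..<n} (\<lambda>_. \<mu>')) snd = PiM {..<n} (\<lambda>_. \<mu>')}"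

end

theory Submission
  imports Defs
begin

text \<open>Write t = 1/(n lam) and c(z) = E_nu loss(W, z). By the Donsker-Varadhan change of measure,
  E_pi y \<le> D(pi || nu x mu'^n) for every coupling pi and every y with E_{nu x mu'^n} e^y \<le> 1.
  Take y(w, s) = t \<Sum>_i (loss(w, s_i) - c(s_i)) + v(w). Under the product measure the n summands
  factorise, so E e^y = E_nu [e^v F^n] with F(w) = E_mu' e^(t (loss(w, Z) - c(Z))), and Fubini
  together with the hypothesis on psi gives E_nu F \<le> psi(t). The obvious choice v = -n ln F
  need not be integrable; v = n (1 - F/psi(t) - ln psi(t)) still has e^v F^n \<le> 1 and
  E_nu v \<ge> -n ln psi(t) \<ge> 1 - psi(t)^n. Multiplying by lam and using E_mu' c = E_nu L_mu'
  (Fubini again) gives the bound.\<close>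

lemma mult_exp_one_minus_le_one: "x * exp (1 - x) \<le> (1::real)"
proof (cases "x \<le> 0")
  case True
  then show ?thesis using mult_nonpos_nonneg[OF True exp_ge_zero[of "1 - x"]] by linarith
next
  case False
  have "x * exp (1 - x) \<le> exp (x - 1) * exp (1 - x)"
    using False exp_ge_add_one_self[of "x - 1"] by (intro mult_right_mono) auto
  then show ?thesis by (simp add: exp_add[symmetric])
qed

lemma ln_le_power_minus_one:
  fixes x :: real assumes "x > 0" shows "real n * ln x \<le> x ^ n - 1"
  using ln_le_minus_one[of "x ^ n"] assms by (simp add: ln_realpow)

lemma le_ln_add_exp_divide_minus_one:
  fixes y p :: real assumes "p > 0" shows "y \<le> ln p + exp y / p - 1"
  using ln_le_minus_one[of "exp y / p"] assms by (simp add: ln_div)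

lemma (in prob_space) pos_of_nn_integral_exp_le:
  assumes "g \<in> borel_measurable M" "(\<integral>\<^sup>+x. ennreal (exp (g x)) \<partial>M) \<le> ennreal c"
  shows "0 < c"
proof (rule ccontr)
  assume "\<not> 0 < c"
  then have "(\<integral>\<^sup>+x. ennreal (exp (g x)) \<partial>M) = 0"
    using assms(2) by (simp add: ennreal_eq_0_iff[THEN iffD2] le_zero_eq)
  then have "AE x in M. False"
    using assms(1) by (subst (asm) nn_integral_0_iff_AE) auto
  then show False by simp
qed

text \<open>The witness is v = k (1 - f/c - ln c) with f the real-valued version of F:
  e^v f^k = (y e^(1-y))^k \<le> 1 for y = f/c, and E f \<le> c bounds E v from below.\<close>
lemma (in prob_space) exists_compensator_for_power:
  assumes F[measurable]: "F \<in> borel_measurable M" and F_int: "(\<integral>\<^sup>+x. F x \<partial>M) \<le> ennreal c"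
    and "c > 0"
  obtains v where "v \<in> borel_measurable M" "integrable M v" "- real k * ln c \<le> (\<integral>x. v x \<partial>M)"
    "(\<integral>\<^sup>+x. ennreal (exp (v x)) * F x ^ k \<partial>M) \<le> 1"
proof
  define f where "f x = enn2real (F x)" for x
  define v where "v x = real k * (1 - f x / c - ln c)" for x
  have f_meas[measurable]: "f \<in> borel_measurable M" unfolding f_def by measurable
  have f_nn_int: "(\<integral>\<^sup>+x. ennreal (f x) \<partial>M) \<le> ennreal c"
  proof -
    have "ennreal (f x) \<le> F x" for x by (cases "F x" rule: ennreal_cases) (auto simp: f_def)
    then show ?thesis using F_int by (meson nn_integral_mono order_trans)
  qed
  have f_int: "integrable M f"
    using f_nn_int by (intro integrableI_nonneg) (auto simp: f_def intro: le_less_trans)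
  have "(\<integral>x. f x \<partial>M) \<le> c"
    using f_nn_int \<open>c > 0\<close> by (subst integral_eq_nn_integral) (auto simp: f_def enn2real_leI)
  then have "0 \<le> real k * (1 - (\<integral>x. f x \<partial>M) / c)" using \<open>c > 0\<close> by simp
  then show "- real k * ln c \<le> (\<integral>x. v x \<partial>M)"
    unfolding v_def using f_int by (simp add: prob_space right_diff_distrib)
  show "v \<in> borel_measurable M" "integrable M v" unfolding v_def using f_int by auto
  have "AE x in M. F x \<noteq> \<infinity>"
    by (rule nn_integral_PInf_AE) (use F_int in \<open>auto simp: top_unique\<close>)
  then have "AE x in M. ennreal (exp (v x)) * F x ^ k \<le> 1"
  proof eventually_elim
    case (elim x)
    then have Fx: "F x = ennreal (f x)" by (simp add: f_def less_top)
    have f_nonneg: "0 \<le> f x" by (simp add: f_def)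
    have exp_v: "exp (v x) = (exp (1 - f x / c) / c) ^ k"
      using \<open>c > 0\<close> by (simp add: v_def exp_of_nat_mult exp_diff)
    have swap: "exp (1 - f x / c) / c * f x = f x / c * exp (1 - f x / c)"
      by (simp add: divide_inverse)
    have "exp (v x) * f x ^ k = (f x / c * exp (1 - f x / c)) ^ k"
      unfolding exp_v power_mult_distrib[symmetric] swap ..
    also have "\<dots> \<le> 1"
      using mult_exp_one_minus_le_one[of "f x / c"] \<open>c > 0\<close>
      by (intro power_le_one) (auto simp: f_def)
    finally have "exp (v x) * f x ^ k \<le> 1" .
    moreover have "ennreal (exp (v x)) * F x ^ k = ennreal (exp (v x) * f x ^ k)"
      using f_nonneg by (simp add: Fx ennreal_power ennreal_mult)
    ultimately show ?case by (simp add: ennreal_leI)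
  qed
  then have "(\<integral>\<^sup>+x. ennreal (exp (v x)) * F x ^ k \<partial>M) \<le> (\<integral>\<^sup>+x. 1 \<partial>M)"
    by (rule nn_integral_mono_AE)
  then show "(\<integral>\<^sup>+x. ennreal (exp (v x)) * F x ^ k \<partial>M) \<le> 1" by (simp add: emeasure_space_1)
qed

lemma (in sigma_finite_measure) nn_integral_PiM_exp_sum:
  assumes "finite I" and g[measurable]: "g \<in> borel_measurable M"
  shows "(\<integral>\<^sup>+s. ennreal (exp (\<Sum>i\<in>I. g (s i))) \<partial>PiM I (\<lambda>_. M))
    = (\<integral>\<^sup>+z. ennreal (exp (g z)) \<partial>M) ^ card I"
proof -
  interpret product_sigma_finite "\<lambda>_. M" by unfold_locales
  have "(\<integral>\<^sup>+s. ennreal (exp (\<Sum>i\<in>I. g (s i))) \<partial>PiM I (\<lambda>_. M))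
      = (\<integral>\<^sup>+s. (\<Prod>i\<in>I. ennreal (exp (g (s i)))) \<partial>PiM I (\<lambda>_. M))"
    using \<open>finite I\<close> by (simp add: exp_sum prod_ennreal)
  also have "\<dots> = (\<Prod>i\<in>I. \<integral>\<^sup>+z. ennreal (exp (g z)) \<partial>M)"
    using assms by (intro product_nn_integral_prod) auto
  finally show ?thesis by simp
qed

lemma exists_compensator_for_iid_exp_sum:
  assumes "prob_space N" "prob_space M" and g[measurable]: "case_prod g \<in> borel_measurable (N \<Otimes>\<^sub>M M)"
    and mgf: "\<And>z. z \<in> space M \<Longrightarrow> (\<integral>\<^sup>+w. ennreal (exp (g w z)) \<partial>N) \<le> ennreal c" and "c > 0"
  obtains v where "v \<in> borel_measurable N" "integrable N v" "- real n * ln c \<le> (\<integral>w. v w \<partial>N)"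
    "(\<integral>\<^sup>+x. ennreal (exp ((\<Sum>i<n. g (fst x) (snd x i)) + v (fst x))) \<partial>(N \<Otimes>\<^sub>M PiM {..<n} (\<lambda>_. M))) \<le> 1"
proof -
  interpret N: prob_space N by fact
  interpret M: prob_space M by fact
  interpret NM: pair_prob_space N M ..
  interpret P: prob_space "PiM {..<n} (\<lambda>_. M)" by (rule prob_space_PiM) (rule M.prob_space_axioms)
  define F where "F w = (\<integral>\<^sup>+z. ennreal (exp (g w z)) \<partial>M)" for w
  have F_meas[measurable]: "F \<in> borel_measurable N" unfolding F_def by measurable
  have "(\<integral>\<^sup>+w. F w \<partial>N) = (\<integral>\<^sup>+z. \<integral>\<^sup>+w. ennreal (exp (g w z)) \<partial>N \<partial>M)"
    unfolding F_def by (rule NM.Fubini'[symmetric]) measurable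
  also have "\<dots> \<le> (\<integral>\<^sup>+z. ennreal c \<partial>M)" by (rule nn_integral_mono) (rule mgf)
  finally have "(\<integral>\<^sup>+w. F w \<partial>N) \<le> ennreal c" by (simp add: M.emeasure_space_1)
  then obtain v where v[measurable]: "v \<in> borel_measurable N" and v_props: "integrable N v"
      "- real n * ln c \<le> (\<integral>w. v w \<partial>N)" "(\<integral>\<^sup>+w. ennreal (exp (v w)) * F w ^ n \<partial>N) \<le> 1"
    using N.exists_compensator_for_power[OF F_meas _ \<open>c > 0\<close>] by metis
  have "(\<integral>\<^sup>+x. ennreal (exp ((\<Sum>i<n. g (fst x) (snd x i)) + v (fst x))) \<partial>(N \<Otimes>\<^sub>M PiM {..<n} (\<lambda>_. M)))
      = (\<integral>\<^sup>+w. \<integral>\<^sup>+s. ennreal (exp (v w)) * ennreal (exp (\<Sum>i<n. g w (s i))) \<partial>PiM {..<n} (\<lambda>_. M) \<partial>N)"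
    by (subst P.nn_integral_fst[symmetric]) (auto simp: exp_add ennreal_mult' mult.commute)
  also have "\<dots> = (\<integral>\<^sup>+w. ennreal (exp (v w)) * F w ^ n \<partial>N)"
    by (intro nn_integral_cong) (simp add: nn_integral_cmult M.nn_integral_PiM_exp_sum F_def)
  finally show ?thesis using that v v_props by simp
qed

text \<open>Donsker-Varadhan: pointwise, y \<le> ln p + e^y/p - 1 for the density p of \<pi>, and the
  last two terms have \<pi>-mean at most 0 because e^y has Q-mass at most 1.\<close>
lemma integral_le_KL_divergence:
  assumes "prob_space Q" "prob_space \<pi>" and ac: "absolutely_continuous Q \<pi>"
    and sets_\<pi>: "sets \<pi> = sets Q"
    and ent_int: "integrable \<pi> (entropy_density (exp 1) Q \<pi>)"
    and y_meas[measurable]: "y \<in> borel_measurable Q" and y_int: "integrable \<pi> y"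
    and exp_y: "(\<integral>\<^sup>+x. ennreal (exp (y x)) \<partial>Q) \<le> 1"
  shows "(\<integral>x. y x \<partial>\<pi>) \<le> KL_divergence (exp 1) Q \<pi>"
proof -
  interpret Q: prob_space Q by fact
  interpret pi: prob_space \<pi> by fact
  define p where "p = RN_deriv Q \<pi>"
  define pr where "pr x = enn2real (p x)" for x
  define R where "R x = exp (y x) / pr x" for x
  have p_meas[measurable]: "p \<in> borel_measurable Q" unfolding p_def by (rule borel_measurable_RN_deriv)
  have R_meas[measurable]: "R \<in> borel_measurable Q" unfolding R_def pr_def by measurable
  then have R_meas_\<pi>[measurable]: "R \<in> borel_measurable \<pi>"
    by (simp add: measurable_cong_sets[OF sets_\<pi> refl])
  have "AE x in Q. p x \<noteq> \<infinity>" unfolding p_def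
    by (rule Q.RN_deriv_finite[OF _ ac sets_\<pi>]) (rule pi.sigma_finite_measure_axioms)
  then have "AE x in density Q p. pr x > 0"
    by (subst AE_density) (auto elim!: eventually_mono simp: pr_def enn2real_positive_iff less_top)
  then have pr_pos: "AE x in \<pi>. pr x > 0"
    unfolding p_def Q.density_RN_deriv[OF ac sets_\<pi>] .
  have "(\<integral>\<^sup>+x. ennreal (R x) \<partial>\<pi>) = (\<integral>\<^sup>+x. p x * ennreal (R x) \<partial>Q)"
    unfolding p_def by (rule Q.RN_deriv_nn_integral[OF ac sets_\<pi>]) measurable
  also have "\<dots> \<le> (\<integral>\<^sup>+x. ennreal (exp (y x)) \<partial>Q)"
  proof (rule nn_integral_mono)
    fix x
    show "p x * ennreal (R x) \<le> ennreal (exp (y x))"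
    proof (cases "pr x > 0")
      case True
      then have "p x = ennreal (pr x)" unfolding pr_def by (cases "p x" rule: ennreal_cases) auto
      then show ?thesis using True by (simp add: R_def ennreal_mult[symmetric])
    next
      case False
      then have "pr x = 0" using enn2real_nonneg[of "p x"] unfolding pr_def by linarith
      then show ?thesis by (simp add: R_def)
    qed
  qed
  finally have R_nn: "(\<integral>\<^sup>+x. ennreal (R x) \<partial>\<pi>) \<le> 1" using exp_y by simp
  have R_int: "integrable \<pi> R"
    using R_nn by (intro integrableI_nonneg[OF R_meas_\<pi>]) (auto simp: R_def pr_def intro: le_less_trans)
  have "(\<integral>x. R x \<partial>\<pi>) \<le> 1"
    using R_nn by (subst integral_eq_nn_integral[OF R_meas_\<pi>]) (auto simp: R_def pr_def enn2real_leI)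
  have ent: "entropy_density (exp 1) Q \<pi> = (\<lambda>x. ln (pr x))"
    by (auto simp: entropy_density_def log_def fun_eq_iff pr_def p_def)
  have "AE x in \<pi>. y x \<le> ln (pr x) + R x - 1"
    using pr_pos by eventually_elim (simp add: R_def le_ln_add_exp_divide_minus_one)
  then have "(\<integral>x. y x \<partial>\<pi>) \<le> (\<integral>x. ln (pr x) + R x - 1 \<partial>\<pi>)"
    using y_int ent_int R_int unfolding ent by (intro integral_mono_AE) auto
  also have "\<dots> = KL_divergence (exp 1) Q \<pi> + (\<integral>x. R x \<partial>\<pi>) - 1"
    using ent_int R_int unfolding KL_divergence_def ent by (simp add: pi.prob_space)
  finally show ?thesis using \<open>(\<integral>x. R x \<partial>\<pi>) \<le> 1\<close> by simp
qed

lemma integral_le_KL: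
  assumes "prob_space Q" "prob_space \<pi>" "sets \<pi> = sets Q"
    and "y \<in> borel_measurable Q" "integrable \<pi> y" "(\<integral>\<^sup>+x. ennreal (exp (y x)) \<partial>Q) \<le> 1"
  shows "ereal (\<integral>x. y x \<partial>\<pi>) \<le> KL \<pi> Q"
  using integral_le_KL_divergence[OF assms(1,2) _ assms(3) _ assms(4-6)] by (auto simp: KL_def)

lemma
  fixes f :: "'w \<Rightarrow> real"
  assumes "\<pi> \<in> couplings \<nu> \<mu>' n" and f: "integrable \<nu> f"
  shows integrable_couplings_fst: "integrable \<pi> (\<lambda>x. f (fst x))"
    and integral_couplings_fst: "(\<integral>x. f (fst x) \<partial>\<pi>) = (\<integral>w. f w \<partial>\<nu>)"
proof -
  have sets: "sets \<pi> = sets (\<nu> \<Otimes>\<^sub>M PiM {..<n} (\<lambda>_. \<mu>'))" and marg: "distr \<pi> \<nu> fst = \<nu>"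
    using assms(1) by (auto simp: couplings_def)
  have fst_meas: "fst \<in> measurable \<pi> \<nu>"
    unfolding measurable_cong_sets[OF sets refl] by simp
  have [measurable]: "f \<in> borel_measurable \<nu>" using f by simp
  show "integrable \<pi> (\<lambda>x. f (fst x))"
    using f integrable_distr_eq[OF fst_meas, of f] marg by simp
  show "(\<integral>x. f (fst x) \<partial>\<pi>) = (\<integral>w. f w \<partial>\<nu>)"
    using integral_distr[OF fst_meas, of f] marg by simp
qed

lemma distr_couplings_component:
  assumes "\<pi> \<in> couplings \<nu> \<mu>' n" "prob_space \<mu>'" "i < n"
  shows "distr \<pi> \<mu>' (\<lambda>x. snd x i) = \<mu>'"
proof -
  let ?P = "PiM {..<n} (\<lambda>_. \<mu>')"
  have sets: "sets \<pi> = sets (\<nu> \<Otimes>\<^sub>M ?P)" and marg: "distr \<pi> ?P snd = ?P"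
    using assms(1) by (auto simp: couplings_def)
  have snd_meas: "snd \<in> measurable \<pi> ?P"
    unfolding measurable_cong_sets[OF sets refl] by simp
  have "distr \<pi> \<mu>' (\<lambda>x. snd x i) = distr (distr \<pi> ?P snd) \<mu>' (\<lambda>s. s i)"
    using assms(3) by (subst distr_distr) (auto simp: snd_meas comp_def)
  also have "\<dots> = \<mu>'"
    unfolding marg using assms(2,3) by (intro distr_PiM_component) auto
  finally show ?thesis .
qed

lemma
  fixes c :: "'z \<Rightarrow> real"
  assumes "\<pi> \<in> couplings \<nu> \<mu>' n" "prob_space \<mu>'" and c: "integrable \<mu>' c"
  shows integrable_couplings_snd_sum: "integrable \<pi> (\<lambda>x. \<Sum>i<n. c (snd x i))"
    and integral_couplings_snd_sum: "(\<integral>x. (\<Sum>i<n. c (snd x i)) \<partial>\<pi>) = real n * (\<integral>z. c z \<partial>\<mu>')"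
proof -
  have [measurable]: "c \<in> borel_measurable \<mu>'" using c by simp
  have sets: "sets \<pi> = sets (\<nu> \<Otimes>\<^sub>M PiM {..<n} (\<lambda>_. \<mu>'))"
    using assms(1) by (simp add: couplings_def)
  have comp_meas: "(\<lambda>x. snd x i) \<in> measurable \<pi> \<mu>'" if "i < n" for i
    unfolding measurable_cong_sets[OF sets refl]
    by (rule measurable_compose[OF measurable_snd measurable_component_singleton]) (use that in simp)
  have int_i: "integrable \<pi> (\<lambda>x. c (snd x i))" if "i < n" for i
    using c integrable_distr_eq[OF comp_meas[OF that], of c]
      distr_couplings_component[OF assms(1,2) that] by simp
  then show "integrable \<pi> (\<lambda>x. \<Sum>i<n. c (snd x i))" by auto
  have "(\<integral>x. c (snd x i) \<partial>\<pi>) = (\<integral>z. c z \<partial>\<mu>')" if "i < n" for i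
    using integral_distr[OF comp_meas[OF that], of c]
      distr_couplings_component[OF assms(1,2) that] by simp
  then show "(\<integral>x. (\<Sum>i<n. c (snd x i)) \<partial>\<pi>) = real n * (\<integral>z. c z \<partial>\<mu>')"
    using int_i by (simp add: integral_sum)
qed

lemma (in pair_sigma_finite) integrable_pair_measure_nonneg:
  fixes f :: "'a \<Rightarrow> 'b \<Rightarrow> real"
  assumes "case_prod f \<in> borel_measurable (M1 \<Otimes>\<^sub>M M2)" "\<And>x y. 0 \<le> f x y"
    and "AE x in M1. integrable M2 (f x)" "integrable M1 (\<lambda>x. \<integral>y. f x y \<partial>M2)"
  shows "integrable (M1 \<Otimes>\<^sub>M M2) (case_prod f)"
  using assms by (intro Fubini_integrable) auto

lemma empirical_gap_lower_bound:
  fixes loss :: "'w \<Rightarrow> 'z \<Rightarrow> real" and \<mu>' :: "'z measure" and n :: nat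
  defines "P \<equiv> PiM {..<n} (\<lambda>_. \<mu>')"
  assumes "prob_space \<nu>" "prob_space \<mu>'" "\<pi> \<in> couplings \<nu> \<mu>' n" "n > 0" "lam > 0"
    and [measurable]: "case_prod loss \<in> borel_measurable (\<nu> \<Otimes>\<^sub>M \<mu>')"
    and A_int: "integrable \<nu> A" and c_int: "integrable \<mu>' c" and v_int: "integrable \<nu> v"
    and gap_int: "integrable \<pi> (\<lambda>x. A (fst x) - (\<Sum>i<n. loss (fst x) (snd x i)) / real n)"
    and exp_bound: "(\<integral>\<^sup>+x. ennreal (exp ((\<Sum>i<n. 1 / (real n * lam) * (loss (fst x) (snd x i) - c (snd x i)))
      + v (fst x))) \<partial>(\<nu> \<Otimes>\<^sub>M P)) \<le> 1"
  shows "ereal ((\<integral>w. A w \<partial>\<nu>) - (\<integral>z. c z \<partial>\<mu>') + lam * (\<integral>w. v w \<partial>\<nu>))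
    \<le> ereal (\<integral>x. A (fst x) - (\<Sum>i<n. loss (fst x) (snd x i)) / real n \<partial>\<pi>) + ereal lam * KL \<pi> (\<nu> \<Otimes>\<^sub>M P)"
proof -
  define G where "G x = A (fst x) - (\<Sum>i<n. loss (fst x) (snd x i)) / real n" for x
  define y where "y x = (\<Sum>i<n. 1 / (real n * lam) * (loss (fst x) (snd x i) - c (snd x i))) + v (fst x)" for x
  have [measurable]: "A \<in> borel_measurable \<nu>" "c \<in> borel_measurable \<mu>'" "v \<in> borel_measurable \<nu>"
    using A_int c_int v_int by auto
  have y_eq: "y = (\<lambda>x. (A (fst x) - G x - (\<Sum>i<n. c (snd x i)) / real n) / lam + v (fst x))"
  proof -
    have "(\<Sum>i<n. 1 / (real n * lam) * (loss w (s i) - c (s i)))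
        = ((\<Sum>i<n. loss w (s i)) - (\<Sum>i<n. c (s i))) / (real n * lam)" for w s
      by (simp add: sum_divide_distrib[symmetric] sum_subtractf)
    then show ?thesis using \<open>lam > 0\<close> \<open>n > 0\<close> by (auto simp: fun_eq_iff y_def G_def field_simps)
  qed
  note fst_props = integrable_couplings_fst[OF \<open>\<pi> \<in> _\<close>] integral_couplings_fst[OF \<open>\<pi> \<in> _\<close>]
  note snd_props = integrable_couplings_snd_sum[OF \<open>\<pi> \<in> _\<close> \<open>prob_space \<mu>'\<close> c_int]
    integral_couplings_snd_sum[OF \<open>\<pi> \<in> _\<close> \<open>prob_space \<mu>'\<close> c_int]
  have G_int: "integrable \<pi> G" using gap_int unfolding G_def .
  have y_int: "integrable \<pi> y"
    unfolding y_eq using fst_props(1)[OF A_int] fst_props(1)[OF v_int] G_int snd_props(1) by auto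
  have "ereal (\<integral>x. y x \<partial>\<pi>) \<le> KL \<pi> (\<nu> \<Otimes>\<^sub>M P)"
    using assms(2-4) y_int exp_bound unfolding couplings_def P_def y_def
    by (intro integral_le_KL) (auto intro!: prob_space_pair prob_space_PiM)
  then have "ereal (\<integral>x. G x \<partial>\<pi>) + ereal lam * ereal (\<integral>x. y x \<partial>\<pi>)
      \<le> ereal (\<integral>x. G x \<partial>\<pi>) + ereal lam * KL \<pi> (\<nu> \<Otimes>\<^sub>M P)"
    using \<open>lam > 0\<close> by (intro add_left_mono ereal_mult_left_mono) auto
  moreover have "lam * (\<integral>x. y x \<partial>\<pi>) = (\<integral>w. A w \<partial>\<nu>) - (\<integral>x. G x \<partial>\<pi>) - (\<integral>z. c z \<partial>\<mu>') + lam * (\<integral>w. v w \<partial>\<nu>)"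
    unfolding y_eq using fst_props[OF A_int] fst_props[OF v_int] G_int snd_props \<open>n > 0\<close> \<open>lam > 0\<close>
    by (simp add: field_simps)
  ultimately show ?thesis unfolding G_def by (simp add: algebra_simps)
qed

theorem lemma3:
  fixes loss :: "'w \<Rightarrow> 'z \<Rightarrow> real" and \<mu> \<mu>' :: "'z measure" and \<nu> :: "'w measure"
    and \<psi> :: "real \<Rightarrow> real" and n :: nat and lam :: real
  assumes "prob_space \<mu>" "prob_space \<mu>'" "sets \<mu>' = sets \<mu>" "prob_space \<nu>"
    and meas: "case_prod loss \<in> borel_measurable (\<nu> \<Otimes>\<^sub>M \<mu>)"
    and nonneg: "\<And>w z. loss w z \<ge> 0"
    and int_mu: "\<And>w. w \<in> space \<nu> \<Longrightarrow> integrable \<mu> (loss w)"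
    and int_mu': "\<And>w. w \<in> space \<nu> \<Longrightarrow> integrable \<mu>' (loss w)"
    and int_nu: "\<And>z. z \<in> space \<mu> \<Longrightarrow> integrable \<nu> (\<lambda>w. loss w z)"
    and int_L: "integrable \<nu> (\<lambda>w. \<integral>z. loss w z \<partial>\<mu>)" "integrable \<nu> (\<lambda>w. \<integral>z. loss w z \<partial>\<mu>')"
    and psi: "\<And>z t. z \<in> space \<mu> \<Longrightarrow> t > 0 \<Longrightarrow>
        (\<integral>\<^sup>+w. ennreal (exp (t * (loss w z - (\<integral>v. loss v z \<partial>\<nu>)))) \<partial>\<nu>) \<le> ennreal (\<psi> t)"
    and "n > 0" and "lam > 0"
  shows "(INF \<pi> \<in> {\<pi> \<in> couplings \<nu> \<mu>' n.
            integrable \<pi> (\<lambda>(w, s). (\<integral>z. loss w z \<partial>\<mu>) - (\<Sum>i<n. loss w (s i)) / real n)}.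
          ereal (\<integral>(w, s). (\<integral>z. loss w z \<partial>\<mu>) - (\<Sum>i<n. loss w (s i)) / real n \<partial>\<pi>)
          + ereal lam * KL \<pi> (\<nu> \<Otimes>\<^sub>M PiM {..<n} (\<lambda>_. \<mu>')))
       \<ge> ereal ((\<integral>w. (\<integral>z. loss w z \<partial>\<mu>) - (\<integral>z. loss w z \<partial>\<mu>') \<partial>\<nu>)
                - lam * (\<psi> (1 / (real n * lam)) ^ n - 1))"
proof -
  interpret \<mu>': prob_space \<mu>' by fact
  interpret \<nu>: prob_space \<nu> by fact
  interpret \<nu>\<mu>': pair_prob_space \<nu> \<mu>' ..
  define t where "t = 1 / (real n * lam)"
  define A where "A w = (\<integral>z. loss w z \<partial>\<mu>)" for w
  define B where "B w = (\<integral>z. loss w z \<partial>\<mu>')" for w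
  define c where "c z = (\<integral>w. loss w z \<partial>\<nu>)" for z
  have loss_meas[measurable]: "case_prod loss \<in> borel_measurable (\<nu> \<Otimes>\<^sub>M \<mu>')"
    using meas by (subst measurable_cong_sets[OF sets_pair_measure_cong[OF refl \<open>sets \<mu>' = sets \<mu>\<close>] refl])
  have "integrable (\<nu> \<Otimes>\<^sub>M \<mu>') (case_prod loss)"
    using int_L(2) int_mu' nonneg by (intro \<nu>\<mu>'.integrable_pair_measure_nonneg) auto
  then have c_int: "integrable \<mu>' c" and c_eq: "(\<integral>z. c z \<partial>\<mu>') = (\<integral>w. B w \<partial>\<nu>)"
    unfolding c_def B_def by (rule \<nu>\<mu>'.integrable_snd, rule \<nu>\<mu>'.Fubini_integral)
  have [measurable]: "c \<in> borel_measurable \<mu>'" using c_int by simp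
  define g where "g w z = t * (loss w z - c z)" for w z
  have g_meas[measurable]: "case_prod g \<in> borel_measurable (\<nu> \<Otimes>\<^sub>M \<mu>')" unfolding g_def by measurable
  have mgf: "(\<integral>\<^sup>+w. ennreal (exp (g w z)) \<partial>\<nu>) \<le> ennreal (\<psi> t)" if "z \<in> space \<mu>'" for z
    using psi[of z t] that sets_eq_imp_space_eq[OF \<open>sets \<mu>' = sets \<mu>\<close>] \<open>n > 0\<close> \<open>lam > 0\<close>
    by (simp add: g_def c_def t_def)
  obtain z where "z \<in> space \<mu>'" using \<mu>'.not_empty by blast
  then have \<psi>_pos: "\<psi> t > 0" by (intro \<nu>.pos_of_nn_integral_exp_le[OF _ mgf]) measurable
  obtain v where v_int: "integrable \<nu> v" and v_ge: "- real n * ln (\<psi> t) \<le> (\<integral>w. v w \<partial>\<nu>)"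
    and exp_bound: "(\<integral>\<^sup>+x. ennreal (exp ((\<Sum>i<n. g (fst x) (snd x i)) + v (fst x)))
      \<partial>(\<nu> \<Otimes>\<^sub>M PiM {..<n} (\<lambda>_. \<mu>'))) \<le> 1"
    by (rule exists_compensator_for_iid_exp_sum[OF assms(4,2) g_meas mgf \<psi>_pos])
  have "lam * - (\<psi> t ^ n - 1) \<le> lam * (\<integral>w. v w \<partial>\<nu>)"
    using v_ge ln_le_power_minus_one[OF \<psi>_pos, of n] \<open>lam > 0\<close> by (intro mult_left_mono) auto
  then have "ereal ((\<integral>w. A w - B w \<partial>\<nu>) - lam * (\<psi> t ^ n - 1))
      \<le> ereal ((\<integral>w. A w \<partial>\<nu>) - (\<integral>z. c z \<partial>\<mu>') + lam * (\<integral>w. v w \<partial>\<nu>))"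
    using int_L unfolding c_eq A_def B_def by (simp add: algebra_simps)
  moreover have "ereal ((\<integral>w. A w \<partial>\<nu>) - (\<integral>z. c z \<partial>\<mu>') + lam * (\<integral>w. v w \<partial>\<nu>))
      \<le> ereal (\<integral>(w, s). A w - (\<Sum>i<n. loss w (s i)) / real n \<partial>\<pi>) + ereal lam * KL \<pi> (\<nu> \<Otimes>\<^sub>M PiM {..<n} (\<lambda>_. \<mu>'))"
    if "\<pi> \<in> couplings \<nu> \<mu>' n" "integrable \<pi> (\<lambda>(w, s). A w - (\<Sum>i<n. loss w (s i)) / real n)" for \<pi>
    using empirical_gap_lower_bound[OF assms(4,2) that(1) \<open>n > 0\<close> \<open>lam > 0\<close> loss_meas _ c_int v_int]
      exp_bound[unfolded g_def t_def] that(2) int_L(1) by (simp add: A_def case_prod_beta')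
  ultimately show ?thesis
    unfolding A_def B_def t_def by (intro INF_greatest) (blast intro: order_trans)
qed

end
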